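(* For all positive integers $n,m,L$ with $L\le m$ and all $M\in[0,m)$, \[ \frac{R^{\rm LC}(M,L)}{R^{\rm lb}(M,L)}\le 18, \] where \[ R^{\rm lb}(M,L)=\max\left\{\max_{s\in\{1,\dots,\min\{\lfloor m/L\rfloor,\,n\}\}}\left(Ls-\frac{sM}{\left\lfloor \lfloor m/L\rfloor / s\right\rfloor}\right),\ \frac{m-M}{\lceil m/L\rceil}\right\}. \]
   Context: Setting: server with library of $m$ files of $B$ bits each, $n$ users each with a cache of $M$ files, each user requesting $L$ distinct files; $\mathbf F$ is the $L\times n$ request matrix. For $M$ such that $t=nM/m$ is an integer, each file is split into $\binom nt$ packets $W_{f,\mathcal T}$ indexed by $t$-subsets $\mathcal T$ of users, and user $u$ caches the packets with $u\in\mathcal T$. The directed conflict graph $\mathcal H^d_{\mathbf F}$ has one vertex for each pair (packet $(f,\mathcal T)$, user $u$) with $f$ requested by $u$ and $u\notin\mathcal T$, and a directed edge from vertex $v_2$ to $v_1$ iff their packets differ and the packet of $v_1$ is not cached by the user of $v_2$. The directed local chromatic number $\chi_l(\mathcal H^d)$ is the minimum over proper colorings $c$ of the underlying undirected graph of $\max_v$ (number of distinct colors on the closed out-neighborhood of $v$, i.e. $v$ and its out-neighbors). For integer $t$, $R^{\rm LC}(M,L)=\max_{\mathbf F}\chi_l(\mathcal H^d_{\mathbf F})/\binom nt$ (in file units); for other $M\in[0,m]$, $R^{\rm LC}(M,L)$ is the rate obtained by memory sharing, i.e. the lower convex envelope in $M$ of the values at the points $M=tm/n$, $t=0,1,\dots,n$.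 *)

theory Defs
  imports Complex_Main
begin

text \<open>Users are 0..<n, files are 0..<m. A request matrix F is an L x n matrix,
  F i u being the i-th file requested by user u (i < L, u < n).\<close>

type_synonym packet = "nat \<times> nat set"      (* (file f, user subset T) *)
type_synonym vertex = "packet \<times> nat"       (* (packet, requesting user u) *)

definition valid_request :: "nat \<Rightarrow> nat \<Rightarrow> nat \<Rightarrow> (nat \<Rightarrow> nat \<Rightarrow> nat) \<Rightarrow> bool" where
  "valid_request n m L F \<longleftrightarrow>
     (\<forall>u<n. \<forall>i<L. F i u < m) \<and>
     (\<forall>u<n. inj_on (\<lambda>i. F i u) {..<L}) \<and>
     (\<forall>i u. (L \<le> i \<or> n \<le> u) \<longrightarrow> F i u = 0)"

definition conflict_vertices :: "nat \<Rightarrow> nat \<Rightarrow> nat \<Rightarrow> (nat \<Rightarrow> nat \<Rightarrow> nat) \<Rightarrow> vertex set" where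
  "conflict_vertices n L t F =
     {((f, T), u). u < n \<and> (\<exists>i<L. F i u = f) \<and> T \<subseteq> {..<n} \<and> card T = t \<and> u \<notin> T}"

text \<open>Directed edge from v2 to v1: packets differ and the packet of v1 is not
  cached by the user of v2.\<close>
definition conflict_arc :: "vertex \<Rightarrow> vertex \<Rightarrow> bool" where
  "conflict_arc v2 v1 \<longleftrightarrow> fst v2 \<noteq> fst v1 \<and> snd v2 \<notin> snd (fst v1)"

definition dir_local_chromatic :: "vertex set \<Rightarrow> (vertex \<Rightarrow> vertex \<Rightarrow> bool) \<Rightarrow> nat" where
  "dir_local_chromatic V A =
     (LEAST k. \<exists>c :: vertex \<Rightarrow> nat.
        (\<forall>v1\<in>V. \<forall>v2\<in>V. (A v1 v2 \<or> A v2 v1) \<longrightarrow> c v1 \<noteq> c v2) \<and>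
        (\<forall>v\<in>V. card (c ` ({v} \<union> {w\<in>V. A v w})) \<le> k))"

definition chi_LC :: "nat \<Rightarrow> nat \<Rightarrow> nat \<Rightarrow> (nat \<Rightarrow> nat \<Rightarrow> nat) \<Rightarrow> nat" where
  "chi_LC n L t F = dir_local_chromatic (conflict_vertices n L t F) conflict_arc"

text \<open>R^LC at the point M = t m / n (in file units).\<close>
definition RLC_point :: "nat \<Rightarrow> nat \<Rightarrow> nat \<Rightarrow> nat \<Rightarrow> real" where
  "RLC_point n m L t =
     real (Max {chi_LC n L t F | F. valid_request n m L F}) / real (n choose t)"

text \<open>R^LC(M,L) for M in [0,m]: the point value when t = nM/m is an integer,
  otherwise the lower convex envelope (memory sharing) of the points
  (t m / n, RLC_point t), t = 0..n.\<close>
definition RLC :: "nat \<Rightarrow> nat \<Rightarrow> nat \<Rightarrow> real \<Rightarrow> real" where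
  "RLC n m L M =
     (if \<exists>t\<le>n. M = real t * real m / real n
      then RLC_point n m L (THE t. t \<le> n \<and> M = real t * real m / real n)
      else Inf {(\<Sum>t\<le>n. w t * RLC_point n m L t) | w.
                  (\<forall>t\<le>n. 0 \<le> w t) \<and> (\<Sum>t\<le>n. w t) = 1 \<and>
                  (\<Sum>t\<le>n. w t * (real t * real m / real n)) = M})"

text \<open>The lower bound R^lb(M,L). Floors of ratios of naturals are nat div.\<close>
definition Rlb :: "nat \<Rightarrow> nat \<Rightarrow> nat \<Rightarrow> real \<Rightarrow> real" where
  "Rlb n m L M =
     max (Max ((\<lambda>s. real L * real s - real s * M / real ((m div L) div s))
                 ` {1..min (m div L) n}))
         ((real m - M) / real_of_int \<lceil>real m / real L\<rceil>)"

end

theory Submission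
  imports Defs
begin

text \<open>Two colourings of the conflict graph bound \<open>R\<^sup>L\<^sup>C\<close> at every memory point \<open>t\<close>:
  colouring a vertex by its packet gives the uncoded rate \<open>m (n - t) / n\<close>, and colouring
  \<open>((f, T), u)\<close> by \<open>(T \<union> {u}, position of f in u's request list)\<close> gives the coded rate
  \<open>L (n - t) / (t + 1)\<close>. Memory sharing between consecutive points turns these into
  \<open>R \<le> m - M\<close>, \<open>R \<le> L n\<close> and \<open>R M \<le> L (m - M)\<close>. If \<open>\<lceil>m/L\<rceil> \<le> 18\<close>, the first bound
  is within a factor 18 of the term \<open>(m - M) / \<lceil>m/L\<rceil>\<close> of \<open>R\<^sup>l\<^sup>b\<close>; so is the third one
  when \<open>M \<ge> m / 17\<close>. For smaller \<open>M\<close> the term of \<open>R\<^sup>l\<^sup>b\<close> at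
  \<open>s = min n (min (\<lfloor>m/L\<rfloor> div 2) \<lfloor>m / (4M)\<rfloor>)\<close> is at least \<open>L s / 2\<close>, while one of the
  three bounds gives \<open>R \<le> 9 L s\<close>.\<close>

lemma dir_local_chromatic_le:
  fixes c :: "vertex \<Rightarrow> nat"
  assumes "\<forall>v1\<in>V. \<forall>v2\<in>V. (A v1 v2 \<or> A v2 v1) \<longrightarrow> c v1 \<noteq> c v2"
    and "\<forall>v\<in>V. card (c ` ({v} \<union> {w\<in>V. A v w})) \<le> k"
  shows "dir_local_chromatic V A \<le> k"
  unfolding dir_local_chromatic_def by (rule Least_le) (use assms in blast)

lemma dir_local_chromatic_le_keys:
  fixes key :: "vertex \<Rightarrow> 'a"
  assumes "finite V"
    and distinct: "\<And>v w. v \<in> V \<Longrightarrow> w \<in> V \<Longrightarrow> A v w \<Longrightarrow> key v \<noteq> key w"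
    and keys: "\<And>v. v \<in> V \<Longrightarrow> key ` ({v} \<union> {w\<in>V. A v w}) \<subseteq> K v"
    and "\<And>v. v \<in> V \<Longrightarrow> finite (K v)" "\<And>v. v \<in> V \<Longrightarrow> card (K v) \<le> k"
  shows "dir_local_chromatic V A \<le> k"
proof -
  obtain g :: "'a \<Rightarrow> nat" where g: "inj_on g (key ` V)"
    using finite_imp_inj_to_nat_seg[of "key ` V"] \<open>finite V\<close> by blast
  show ?thesis
  proof (rule dir_local_chromatic_le[where c = "g \<circ> key"]; intro ballI impI)
    fix v w assume "v \<in> V" "w \<in> V" "A v w \<or> A w v"
    then show "(g \<circ> key) v \<noteq> (g \<circ> key) w"
      using distinct inj_onD[OF g] by (metis comp_apply image_eqI)
  next
    fix v assume v: "v \<in> V"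
    have "card ((g \<circ> key) ` ({v} \<union> {w\<in>V. A v w})) \<le> card (key ` ({v} \<union> {w\<in>V. A v w}))"
      unfolding image_comp[symmetric] by (rule card_image_le) (use \<open>finite V\<close> in auto)
    also have "\<dots> \<le> card (K v)"
      using assms(4)[OF v] keys[OF v] by (rule card_mono)
    finally show "card ((g \<circ> key) ` ({v} \<union> {w\<in>V. A v w})) \<le> k"
      using assms(5)[OF v] by linarith
  qed
qed

lemma finite_conflict_vertices: "finite (conflict_vertices n L t F)"
proof (rule finite_subset)
  show "conflict_vertices n L t F \<subseteq> ((case_prod F ` ({..<L} \<times> {..<n})) \<times> Pow {..<n}) \<times> {..<n}"
    unfolding conflict_vertices_def by force
qed auto

lemma chi_LC_le_uncoded:
  assumes "valid_request n m L F"
  shows "chi_LC n L t F \<le> m * ((n - 1) choose t)"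
  unfolding chi_LC_def
proof (rule dir_local_chromatic_le_keys[where key = fst])
  let ?V = "conflict_vertices n L t F"
  let ?K = "\<lambda>v. {..<m} \<times> {T. T \<subseteq> {..<n} - {snd v} \<and> card T = t}"
  show "?K v \<supseteq> fst ` ({v} \<union> {w\<in>?V. conflict_arc v w})" if "v \<in> ?V" for v
    using that assms unfolding conflict_vertices_def conflict_arc_def valid_request_def by force
  show "card (?K v) \<le> m * ((n - 1) choose t)" if "v \<in> ?V" for v
  proof -
    have "card ({..<n} - {snd v}) = n - 1"
      using that unfolding conflict_vertices_def by auto
    then show ?thesis by (simp add: card_cartesian_product n_subsets)
  qed
qed (auto simp: finite_conflict_vertices conflict_arc_def)

lemma chi_LC_le_coded: "chi_LC n L t F \<le> L * (n choose Suc t)"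
  unfolding chi_LC_def
proof -
  let ?V = "conflict_vertices n L t F"
  let ?K = "{S. S \<subseteq> {..<n} \<and> card S = Suc t} \<times> {..<L}"
  define idx where "idx v = (LEAST i. i < L \<and> F i (snd v) = fst (fst v))" for v :: vertex
  define key where "key v = (snd (fst v) \<union> {snd v}, idx v)" for v :: vertex
  have idx: "idx v < L \<and> F (idx v) (snd v) = fst (fst v)" if v: "v \<in> ?V" for v
  proof -
    obtain i where "i < L \<and> F i (snd v) = fst (fst v)"
      using v unfolding conflict_vertices_def by auto
    then show ?thesis unfolding idx_def by (rule LeastI)
  qed
  have key_in: "key v \<in> ?K" if v: "v \<in> ?V" for v
  proof -
    obtain f T u where v_eq: "v = ((f, T), u)" by (metis prod.collapse)
    have "T \<subseteq> {..<n}" "card T = t" "u \<notin> T" "u < n"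
      using v unfolding v_eq conflict_vertices_def by auto
    moreover have "finite T" using \<open>T \<subseteq> {..<n}\<close> finite_subset by blast
    ultimately show ?thesis using idx[OF v] unfolding key_def v_eq by auto
  qed
  \<comment> \<open>Equal keys of different users \<open>u \<noteq> u'\<close> force \<open>u \<in> T'\<close>: user \<open>u\<close> caches the packet of \<open>w\<close>.\<close>
  have key_distinct: "key v \<noteq> key w" if "v \<in> ?V" "w \<in> ?V" "conflict_arc v w" for v w
  proof
    assume same: "key v = key w"
    obtain f T u where v_eq: "v = ((f, T), u)" by (metis prod.collapse)
    obtain f' T' u' where w_eq: "w = ((f', T'), u')" by (metis prod.collapse)
    have "u \<notin> T" "u' \<notin> T'"
      using that unfolding v_eq w_eq conflict_vertices_def by auto
    moreover have "T \<union> {u} = T' \<union> {u'}" and "idx v = idx w"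
      using same unfolding key_def v_eq w_eq by auto
    moreover have "u \<notin> T'" and packets: "(f, T) \<noteq> (f', T')"
      using \<open>conflict_arc v w\<close> unfolding conflict_arc_def v_eq w_eq by auto
    ultimately have "u = u'" and "T = T'" by blast+
    moreover have "f = f'"
      using idx[OF that(1)] idx[OF that(2)] \<open>idx v = idx w\<close> \<open>u = u'\<close>
      unfolding v_eq w_eq by auto
    ultimately show False using packets by simp
  qed
  show "dir_local_chromatic ?V conflict_arc \<le> L * (n choose Suc t)"
  proof (rule dir_local_chromatic_le_keys[where key = key and K = "\<lambda>_. ?K"])
    show "card ?K \<le> L * (n choose Suc t)"
      by (simp add: card_cartesian_product n_subsets)
    show "key ` ({v} \<union> {w\<in>?V. conflict_arc v w}) \<subseteq> ?K" if "v \<in> ?V" for v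
      using that key_in by blast
  qed (use key_distinct finite_conflict_vertices in auto)
qed

lemma valid_request_exists:
  assumes "L \<le> m"
  shows "valid_request n m L (\<lambda>i u. if i < L \<and> u < n then i else 0)"
  using assms unfolding valid_request_def by (auto simp: inj_on_def)

lemma RLC_point_le:
  assumes "\<And>F. valid_request n m L F \<Longrightarrow> chi_LC n L t F \<le> B" and "L \<le> m"
  shows "RLC_point n m L t \<le> real B / real (n choose t)"
proof -
  let ?S = "{chi_LC n L t F | F. valid_request n m L F}"
  have bounded: "?S \<subseteq> {..B}" using assms(1) by auto
  moreover have "finite ?S" using bounded finite_subset by blast
  moreover have "?S \<noteq> {}" using valid_request_exists[OF assms(2)] by blast
  ultimately have "Max ?S \<le> B" by (simp add: subset_iff)
  then show ?thesis unfolding RLC_point_def by (simp add: divide_right_mono)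
qed

lemma RLC_point_le_uncoded:
  assumes "0 < n" "t \<le> n" "L \<le> m"
  shows "RLC_point n m L t \<le> real m * (real n - real t) / real n"
proof -
  have "RLC_point n m L t \<le> real (m * ((n - 1) choose t)) / real (n choose t)"
    using chi_LC_le_uncoded assms(3) by (rule RLC_point_le)
  also have "\<dots> = real m * (real n - real t) / real n"
  proof -
    have "real (n - t) * real (n choose t) = real n * real ((n - 1) choose t)"
      by (metis binomial_absorb_comp of_nat_mult)
    moreover have "real (n choose t) > 0" using assms(2) by simp
    ultimately show ?thesis using assms(1,2) by (simp add: field_simps of_nat_diff)
  qed
  finally show ?thesis .
qed

lemma RLC_point_le_coded:
  assumes "t \<le> n" "L \<le> m"
  shows "RLC_point n m L t \<le> real L * (real n - real t) / (real t + 1)"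
proof -
  have "RLC_point n m L t \<le> real (L * (n choose Suc t)) / real (n choose t)"
    using chi_LC_le_coded assms(2) by (rule RLC_point_le)
  also have "\<dots> = real L * (real n - real t) / (real t + 1)"
  proof -
    have "Suc t * (n choose Suc t) = (n - t) * (n choose t)"
      using binomial_absorption[of t n] binomial_absorb_comp[of n t] by simp
    then have "real (n choose Suc t) * (real t + 1) = (real n - real t) * real (n choose t)"
      using assms(1) by (metis (mono_tags) add.commute of_nat_Suc of_nat_diff of_nat_mult mult.commute)
    then have "real L * real (n choose Suc t) * (real t + 1)
        = real L * (real n - real t) * real (n choose t)"
      by (simp add: mult.assoc)
    moreover have "real (n choose t) > 0" using assms(1) by simp
    ultimately show ?thesis by (simp add: frac_eq_eq)
  qed
  finally show ?thesis .
qed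

lemma sum_two_point_weights:
  fixes g :: "nat \<Rightarrow> real"
  assumes "t < n"
  shows "(\<Sum>s\<le>n. ((if s = t then 1 - \<theta> else 0) + (if s = Suc t then \<theta> else 0)) * g s)
       = (1 - \<theta>) * g t + \<theta> * g (Suc t)"
  using assms by (simp add: distrib_right sum.distrib if_distrib[of "\<lambda>w. w * _"] sum.delta cong: if_cong)

lemma RLC_le_interpolation:
  assumes n: "0 < n" and m: "0 < m" and "t < n" "0 \<le> \<theta>" "\<theta> < 1"
    and M: "M = (real t + \<theta>) * real m / real n"
  shows "RLC n m L M \<le> (1 - \<theta>) * RLC_point n m L t + \<theta> * RLC_point n m L (Suc t)"
proof (cases "\<exists>t'\<le>n. M = real t' * real m / real n")
  case True
  then obtain t' where t': "t' \<le> n" "M = real t' * real m / real n" by blast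
  have "real m * real t' = real m * (real t + \<theta>)" using t'(2) M n by (simp add: field_simps)
  then have "real t' = real t + \<theta>" using m by simp
  then have "t' = t" using \<open>0 \<le> \<theta>\<close> \<open>\<theta> < 1\<close> by linarith
  moreover have "\<theta> = 0" using \<open>real t' = real t + \<theta>\<close> \<open>t' = t\<close> by simp
  moreover have "(THE t. t \<le> n \<and> M = real t * real m / real n) = t'"
    using t' n m by (intro the_equality) (auto simp: field_simps)
  ultimately show ?thesis using True unfolding RLC_def by simp
next
  case False
  let ?P = "RLC_point n m L"
  define w where "w s = (if s = t then 1 - \<theta> else 0) + (if s = Suc t then \<theta> else 0)" for s
  have "(1 - \<theta>) * ?P t + \<theta> * ?P (Suc t) \<in> {(\<Sum>t\<le>n. w t * ?P t) | w.
                  (\<forall>t\<le>n. 0 \<le> w t) \<and> (\<Sum>t\<le>n. w t) = 1 \<and>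
                  (\<Sum>t\<le>n. w t * (real t * real m / real n)) = M}"
  proof (intro CollectI exI conjI)
    show "(1 - \<theta>) * ?P t + \<theta> * ?P (Suc t) = (\<Sum>t\<le>n. w t * ?P t)"
      unfolding w_def using sum_two_point_weights[OF \<open>t < n\<close>] by simp
    show "\<forall>s\<le>n. 0 \<le> w s" unfolding w_def using assms(4,5) by auto
    show "(\<Sum>s\<le>n. w s) = 1"
      unfolding w_def using sum_two_point_weights[OF \<open>t < n\<close>, of \<theta> "\<lambda>_. 1"] by simp
    show "(\<Sum>s\<le>n. w s * (real s * real m / real n)) = M"
      unfolding w_def sum_two_point_weights[OF \<open>t < n\<close>] M using n by (simp add: field_simps)
  qed
  moreover have "bdd_below {(\<Sum>t\<le>n. w t * ?P t) | w.
                  (\<forall>t\<le>n. 0 \<le> w t) \<and> (\<Sum>t\<le>n. w t) = 1 \<and>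
                  (\<Sum>t\<le>n. w t * (real t * real m / real n)) = M}"
    by (rule bdd_belowI[of _ 0]) (auto intro!: sum_nonneg simp: RLC_point_def)
  ultimately show ?thesis unfolding RLC_def if_not_P[OF False] by (rule cInf_lower)
qed

lemma RLC_le_interpolated_bound:
  assumes n: "0 < n" and m: "0 < m" and "0 \<le> M" "M < real m"
    and bound: "\<And>t. t \<le> n \<Longrightarrow> RLC_point n m L t \<le> f t"
  obtains t \<theta> where "t < n" "0 \<le> \<theta>" "\<theta> < 1" "real t + \<theta> = real n * M / real m"
    "RLC n m L M \<le> (1 - \<theta>) * f t + \<theta> * f (Suc t)"
proof -
  define x where "x = real n * M / real m"
  define t where "t = nat \<lfloor>x\<rfloor>"
  define \<theta> where "\<theta> = x - real t"
  have "0 \<le> x" "x < real n" unfolding x_def using assms(3,4) n m by (simp_all add: field_simps)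
  then have "real t = of_int \<lfloor>x\<rfloor>" unfolding t_def by simp
  then have "0 \<le> \<theta>" "\<theta> < 1" unfolding \<theta>_def by linarith+
  moreover have "t < n" using \<open>x < real n\<close> \<open>real t = of_int \<lfloor>x\<rfloor>\<close> by linarith
  moreover have "real t + \<theta> = x" unfolding \<theta>_def by simp
  moreover have "RLC n m L M \<le> (1 - \<theta>) * RLC_point n m L t + \<theta> * RLC_point n m L (Suc t)"
    using n m \<open>t < n\<close> \<open>0 \<le> \<theta>\<close> \<open>\<theta> < 1\<close>
    by (intro RLC_le_interpolation) (auto simp: \<theta>_def x_def)
  moreover have "\<dots> \<le> (1 - \<theta>) * f t + \<theta> * f (Suc t)"
    using bound[of t] bound[of "Suc t"] \<open>t < n\<close> \<open>0 \<le> \<theta>\<close> \<open>\<theta> < 1\<close>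
    by (intro add_mono mult_left_mono) auto
  ultimately show ?thesis using that unfolding x_def by auto
qed

lemma RLC_le_uncoded:
  assumes n: "0 < n" and m: "0 < m" and "0 \<le> M" "M < real m" "L \<le> m"
  shows "RLC n m L M \<le> real m - M"
proof -
  obtain t \<theta> where "real t + \<theta> = real n * M / real m"
    and le: "RLC n m L M \<le> (1 - \<theta>) * (real m * (real n - real t) / real n)
                               + \<theta> * (real m * (real n - real (Suc t)) / real n)"
    using RLC_le_interpolated_bound[OF n m assms(3,4), of L "\<lambda>t. real m * (real n - real t) / real n"]
      RLC_point_le_uncoded[OF n _ assms(5)] by blast
  have "(1 - \<theta>) * (real m * (real n - real t) / real n) + \<theta> * (real m * (real n - real (Suc t)) / real n)
      = real m * (real n - (real t + \<theta>)) / real n"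
    using n by (simp add: field_simps)
  also have "\<dots> = real m - M"
    unfolding \<open>real t + \<theta> = real n * M / real m\<close> using n m by (simp add: field_simps)
  finally show ?thesis using le by simp
qed

lemma RLC_le_coded:
  assumes n: "0 < n" and m: "0 < m" and "0 \<le> M" "M < real m" "L \<le> m"
  defines "x \<equiv> real n * M / real m"
  shows "RLC n m L M \<le> real L * (real n - x) / max 1 x"
proof -
  obtain t \<theta> where "t < n" "0 \<le> \<theta>" "\<theta> < 1" and x: "real t + \<theta> = x"
    and le: "RLC n m L M \<le> (1 - \<theta>) * (real L * (real n - real t) / (real t + 1))
                               + \<theta> * (real L * (real n - real (Suc t)) / (real (Suc t) + 1))"
    using RLC_le_interpolated_bound[OF n m assms(3,4), of L "\<lambda>t. real L * (real n - real t) / (real t + 1)"]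
      RLC_point_le_coded[OF _ assms(5)] unfolding x_def by blast
  have "\<theta> * (real L * (real n - real (Suc t)) / (real (Suc t) + 1))
      \<le> \<theta> * (real L * (real n - real (Suc t)) / (real t + 1))"
    using \<open>t < n\<close> \<open>0 \<le> \<theta>\<close> by (intro mult_left_mono divide_left_mono) auto
  then have "RLC n m L M \<le> (1 - \<theta>) * (real L * (real n - real t) / (real t + 1))
                           + \<theta> * (real L * (real n - real (Suc t)) / (real t + 1))"
    using le by linarith
  also have "\<dots> = real L * (real n - x) / (real t + 1)"
  proof -
    have "(1 - \<theta>) * (real L * (real n - real t)) + \<theta> * (real L * (real n - real (Suc t)))
        = real L * (real n - x)"
      unfolding x[symmetric] by (simp add: algebra_simps)
    then show ?thesis by (metis add_divide_distrib times_divide_eq_right)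
  qed
  also have "\<dots> \<le> real L * (real n - x) / max 1 x"
    using x \<open>t < n\<close> \<open>0 \<le> \<theta>\<close> \<open>\<theta> < 1\<close> by (intro divide_left_mono) auto
  finally show ?thesis .
qed

lemma RLC_le_users:
  assumes "0 < n" "0 < m" "0 \<le> M" "M < real m" "L \<le> m"
  shows "RLC n m L M \<le> real L * real n"
proof -
  define x where "x = real n * M / real m"
  have "0 \<le> x" "x \<le> real n" unfolding x_def using assms by (simp_all add: field_simps)
  have "RLC n m L M \<le> real L * (real n - x) / max 1 x"
    unfolding x_def using assms by (rule RLC_le_coded)
  also have "\<dots> \<le> real L * (real n - x) / 1"
    using \<open>x \<le> real n\<close> by (intro divide_left_mono) auto
  also have "\<dots> \<le> real L * real n"
    using \<open>0 \<le> x\<close> by (simp add: mult_left_mono)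
  finally show ?thesis .
qed

lemma RLC_mult_memory_le:
  assumes n: "0 < n" and m: "0 < m" and "0 < M" "M < real m" "L \<le> m"
  shows "RLC n m L M * M \<le> real L * (real m - M)"
proof -
  define x where "x = real n * M / real m"
  have "0 < x" "x \<le> real n" unfolding x_def using assms by (simp_all add: field_simps)
  have "RLC n m L M \<le> real L * (real n - x) / max 1 x"
    unfolding x_def using assms by (intro RLC_le_coded) auto
  also have "\<dots> \<le> real L * (real n - x) / x"
    using \<open>0 < x\<close> \<open>x \<le> real n\<close> by (intro divide_left_mono) auto
  finally have "RLC n m L M * x \<le> real L * (real n - x)"
    using \<open>0 < x\<close> by (simp add: pos_le_divide_eq)
  then have "RLC n m L M * x * (real m / real n) \<le> real L * (real n - x) * (real m / real n)"
    by (rule mult_right_mono) simp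
  moreover have "x * (real m / real n) = M" "(real n - x) * (real m / real n) = real m - M"
    unfolding x_def using n m by (simp_all add: field_simps)
  ultimately show ?thesis by (metis mult.assoc)
qed

lemma Rlb_ge_ceiling_term: "(real m - M) / real_of_int \<lceil>real m / real L\<rceil> \<le> Rlb n m L M"
  unfolding Rlb_def by simp

lemma Rlb_ge_term:
  assumes "s \<in> {1..min (m div L) n}"
  shows "real L * real s - real s * M / real ((m div L) div s) \<le> Rlb n m L M"
proof -
  have "real L * real s - real s * M / real ((m div L) div s)
      \<le> Max ((\<lambda>s. real L * real s - real s * M / real ((m div L) div s)) ` {1..min (m div L) n})"
    using assms by (intro Max_ge) auto
  then show ?thesis unfolding Rlb_def by linarith
qed

lemma less_mult_Suc_div:
  assumes "0 < L"
  shows "real m < real L * (real (m div L) + 1)"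
proof -
  have "m < L * (m div L + 1)"
    using assms by (simp add: dividend_less_times_div)
  then have "real m < real (L * (m div L + 1))" by (simp only: of_nat_less_iff)
  then show ?thesis by (simp add: algebra_simps)
qed

lemma ceiling_quotient_bounds:
  assumes "0 < L" "0 < m"
  defines "c \<equiv> \<lceil>real m / real L\<rceil>"
  shows "0 < c" "c \<le> int (m div L) + 1" "real L * real_of_int c < real m + real L"
proof -
  show "0 < c" unfolding c_def using assms by simp
  have "real m / real L < real (m div L) + 1"
    using less_mult_Suc_div[OF assms(1), of m] assms(1) by (simp add: divide_less_eq mult.commute)
  then show "c \<le> int (m div L) + 1"
    unfolding c_def by (simp add: ceiling_le_iff)
  have "real_of_int c < real m / real L + 1"
    unfolding c_def using ceiling_correct[of "real m / real L"] by linarith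
  then show "real L * real_of_int c < real m + real L"
    using assms(1) by (simp add: field_simps)
qed

lemma half_le_lower_bound_term:
  assumes "1 \<le> s" "2 * s \<le> N" "real m < real L * (real N + 1)" "4 * real s * M \<le> real m"
  shows "real L * real s / 2 \<le> real L * real s - real s * M / real (N div s)"
proof -
  define q where "q = N div s"
  have "2 \<le> q" unfolding q_def using assms(1,2) div_le_mono[OF assms(2), of s] by simp
  have "N < q * s + s"
    using assms(1) div_mult_mod_eq[of N s] mod_less_divisor[of s N] unfolding q_def by linarith
  also have "\<dots> \<le> 2 * q * s" using \<open>2 \<le> q\<close> by simp
  finally have "real (N + 1) \<le> real (2 * q * s)" by (simp only: of_nat_le_iff)
  then have "real N + 1 \<le> 2 * real q * real s" by simp
  then have "real m \<le> 2 * real L * real s * real q"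
    using assms(3) mult_left_mono[of "real N + 1" "2 * real q * real s" "real L"] by (simp add: algebra_simps)
  then have "real s * M \<le> real L * real s * real q / 2" using assms(4) by simp
  then have "real s * M / real q \<le> real L * real s / 2"
    using \<open>2 \<le> q\<close> by (simp add: divide_le_eq mult.commute)
  then show ?thesis unfolding q_def by linarith
qed

lemma exists_memory_scale:
  assumes "0 < n" "0 \<le> M" "4 * M \<le> real m"
  obtains k :: nat where "1 \<le> k" "4 * real k * M \<le> real m" "k = n \<or> real m \<le> 8 * real k * M"
proof (cases "M = 0")
  case True
  then show ?thesis using that[of n] assms by simp
next
  case False
  then have "0 < M" using assms(2) by simp
  define y where "y = real m / (4 * M)"
  define k where "k = nat \<lfloor>y\<rfloor>"
  have "1 \<le> y" unfolding y_def using \<open>0 < M\<close> assms(3) by simp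
  then have "real k = of_int \<lfloor>y\<rfloor>" unfolding k_def by simp
  then have "1 \<le> k" "real k \<le> y" "y \<le> 2 * real k"
    using \<open>1 \<le> y\<close> floor_correct[of y] one_le_floor[of y] by linarith+
  moreover have "4 * real k * M \<le> real m \<longleftrightarrow> real k \<le> y"
    and "real m \<le> 8 * real k * M \<longleftrightarrow> y \<le> 2 * real k"
    unfolding y_def using \<open>0 < M\<close> by (simp_all add: field_simps)
  ultimately show ?thesis using that[of k] by blast
qed

lemma le_nine_times_users_files:
  fixes U M :: real
  assumes "s = n \<or> s = N div 2 \<or> real m \<le> 8 * real s * M"
    and "18 \<le> N" "real m < real L * (real N + 1)" "0 \<le> M" "M < real m"
    and "U \<le> real m - M" "U \<le> real L * real n" "0 < M \<Longrightarrow> U * M \<le> real L * (real m - M)"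
  shows "U \<le> 9 * (real L * real s)"
  using assms(1)
proof (elim disjE)
  assume "s = n"
  then have "real L * real s = real L * real n" by simp
  moreover have "0 \<le> real L * real n" by simp
  ultimately show ?thesis using assms(7) by linarith
next
  assume "s = N div 2"
  then have "real N + 1 \<le> 9 * real s" using assms(2) by linarith
  then have "real L * (real N + 1) \<le> real L * (9 * real s)"
    by (rule mult_left_mono) simp
  then have "real L * (real N + 1) \<le> 9 * (real L * real s)" by simp
  then show ?thesis using assms(3,4,6) by linarith
next
  assume m: "real m \<le> 8 * real s * M"
  have "0 < M" using assms(4,5) m by (cases "M = 0") auto
  have "U * M \<le> real L * (real m - M)" by (rule assms(8)[OF \<open>0 < M\<close>])
  also have "\<dots> \<le> real L * (8 * real s * M)"
    using m assms(4) by (intro mult_left_mono) auto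
  also have "\<dots> \<le> (9 * (real L * real s)) * M"
    using \<open>0 < M\<close> by (simp add: algebra_simps)
  finally show ?thesis using \<open>0 < M\<close> by simp
qed

lemma small_memory_ratio:
  fixes U M :: real
  assumes "0 < n" "18 \<le> N" "real m < real L * (real N + 1)" "0 \<le> M" "17 * M < real m"
    and U: "U \<le> real m - M" "U \<le> real L * real n" "0 < M \<Longrightarrow> U * M \<le> real L * (real m - M)"
  obtains s where "1 \<le> s" "s \<le> N" "s \<le> n"
    "U \<le> 18 * (real L * real s - real s * M / real (N div s))"
proof -
  have "4 * M \<le> real m" using assms(4,5) by linarith
  then obtain k where "1 \<le> k" "4 * real k * M \<le> real m" "k = n \<or> real m \<le> 8 * real k * M"
    using exists_memory_scale[OF assms(1,4)] by blast
  define s where "s = min n (min (N div 2) k)"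
  have "1 \<le> s" "2 * s \<le> N" "s \<le> n" unfolding s_def using assms(1,2) \<open>1 \<le> k\<close> by auto
  have "real s \<le> real k" unfolding s_def by simp
  then have "real s * M \<le> real k * M" using assms(4) by (rule mult_right_mono)
  then have "4 * real s * M \<le> real m" using \<open>4 * real k * M \<le> real m\<close> by linarith
  have "s = n \<or> s = N div 2 \<or> real m \<le> 8 * real s * M"
    using \<open>k = n \<or> real m \<le> 8 * real k * M\<close> unfolding s_def by (auto simp: min_def)
  then have "U \<le> 9 * (real L * real s)"
    using assms(2-5) U by (intro le_nine_times_users_files) auto
  also have "\<dots> \<le> 18 * (real L * real s - real s * M / real (N div s))"
    using half_le_lower_bound_term[OF \<open>1 \<le> s\<close> \<open>2 * s \<le> N\<close> assms(3) \<open>4 * real s * M \<le> real m\<close>]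
    by argo
  finally show ?thesis using that \<open>1 \<le> s\<close> \<open>2 * s \<le> N\<close> \<open>s \<le> n\<close> by simp
qed

lemma large_memory_ratio:
  fixes U M c :: real
  assumes "18 * real L \<le> real m" "real m \<le> 17 * M" "M < real m"
    and "0 < c" "real L * c < real m + real L"
    and "U * M \<le> real L * (real m - M)"
  shows "U \<le> 18 * ((real m - M) / c)"
proof -
  have "0 < M" using assms(2,3) by linarith
  \<comment> \<open>\<open>L c < m + L \<le> 19 m / 18 \<le> 19 \<cdot> 17 M / 18 < 18 M\<close>\<close>
  have Lc: "real L * c \<le> 18 * M" using assms(1,2,5) by linarith
  have "(U * c) * M = (U * M) * c" by simp
  also have "\<dots> \<le> (real L * (real m - M)) * c" using assms(4,6) by (intro mult_right_mono) auto
  also have "\<dots> = (real L * c) * (real m - M)" by simp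
  also have "\<dots> \<le> (18 * M) * (real m - M)" using Lc assms(3) by (intro mult_right_mono) auto
  also have "\<dots> = (18 * (real m - M)) * M" by simp
  finally have "U * c \<le> 18 * (real m - M)" using \<open>0 < M\<close> by (simp only: mult_le_cancel_right_pos)
  then show ?thesis using assms(4) by (simp add: pos_le_divide_eq mult.commute)
qed

lemma le_18_times_lower_bound:
  fixes U R M :: real
  assumes "0 < n" "0 < m" "0 < L" "0 \<le> M" "M < real m"
    and U: "U \<le> real m - M" "U \<le> real L * real n" "0 < M \<Longrightarrow> U * M \<le> real L * (real m - M)"
    and R_ceiling: "(real m - M) / real_of_int \<lceil>real m / real L\<rceil> \<le> R"
    and R_term: "\<And>s. s \<in> {1..min (m div L) n} \<Longrightarrow>
                   real L * real s - real s * M / real ((m div L) div s) \<le> R"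
  shows "U \<le> 18 * R"
proof -
  define N where "N = m div L"
  define c where "c = \<lceil>real m / real L\<rceil>"
  have c: "0 < c" "c \<le> int N + 1" "real L * real_of_int c < real m + real L"
    using ceiling_quotient_bounds[OF assms(3,2)] unfolding c_def N_def by auto
  show ?thesis
  proof (cases "c \<le> 18")
    case True
    have "U \<le> real_of_int c * ((real m - M) / real_of_int c)" using U(1) c(1) by simp
    also have "\<dots> \<le> 18 * ((real m - M) / real_of_int c)"
      using True c(1) assms(5) by (intro mult_right_mono) auto
    finally show ?thesis using R_ceiling unfolding c_def by linarith
  next
    case False
    then have "18 \<le> N" using c(2) by linarith
    then have "18 * L \<le> m" using div_times_less_eq_dividend[of m L] unfolding N_def
      by (metis le_trans mult.commute mult_le_mono2)
    then have "18 * real L \<le> real m" by (metis of_nat_le_iff of_nat_mult of_nat_numeral)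
    show ?thesis
    proof (cases "real m \<le> 17 * M")
      case True
      then have "0 < M" using assms(5) by linarith
      have "U \<le> 18 * ((real m - M) / real_of_int c)"
        using c(1) by (intro large_memory_ratio[OF \<open>18 * real L \<le> real m\<close> True assms(5) _ c(3) U(3)[OF \<open>0 < M\<close>]]) auto
      then show ?thesis using R_ceiling unfolding c_def by linarith
    next
      case False
      have "real m < real L * (real N + 1)" unfolding N_def by (rule less_mult_Suc_div[OF assms(3)])
      moreover have "17 * M < real m" using False by simp
      ultimately obtain s where "1 \<le> s" "s \<le> N" "s \<le> n"
        "U \<le> 18 * (real L * real s - real s * M / real (N div s))"
        using small_memory_ratio[OF assms(1) \<open>18 \<le> N\<close> _ assms(4) _ U] by blast
      then show ?thesis using R_term[of s] unfolding N_def by auto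
    qed
  qed
qed

theorem theorem6:
  fixes n m L :: nat and M :: real
  assumes "0 < n" and "0 < m" and "0 < L" and "L \<le> m"
    and "0 \<le> M" and "M < real m"
  shows "RLC n m L M / Rlb n m L M \<le> 18"
proof -
  have "RLC n m L M \<le> 18 * Rlb n m L M"
  proof (rule le_18_times_lower_bound[OF assms(1-3,5,6)])
    show "RLC n m L M \<le> real m - M" "RLC n m L M \<le> real L * real n"
      using RLC_le_uncoded RLC_le_users assms by auto
    show "0 < M \<Longrightarrow> RLC n m L M * M \<le> real L * (real m - M)"
      using RLC_mult_memory_le assms by auto
  qed (fact Rlb_ge_ceiling_term, fact Rlb_ge_term)
  moreover have "0 < (real m - M) / real_of_int \<lceil>real m / real L\<rceil>"
    using ceiling_quotient_bounds(1)[OF assms(3,2)] assms(6) by simp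
  then have "0 < Rlb n m L M" using Rlb_ge_ceiling_term[of m M L n] by linarith
  ultimately show ?thesis by (metis pos_divide_le_eq)
qed

end
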